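(* Let $\mathcal D$ be an ordered, oriented Descartes configuration whose curvature-center coordinate matrix $M=M_{\mathcal D}$ is an integer matrix, and let $g=\gcd(a_1,a_2,a_3,a_4)$, where $(a_1,a_2,a_3,a_4)^T$ is the first column of $M$ (the signed curvatures). Then the augmented curvature-center coordinate matrix $W_{\mathcal D}$ is an integer matrix if and only if one of the following holds: (i) $g=1$; (ii) $g=2$ and in each row of $M$ the sum of the second and third entries is odd; (iii) $g=4$ and the $4\times2$ matrix formed by the second and third columns of $M$ is congruent modulo $2$ to $\begin{pmatrix}1&0\\1&0\\1&0\\1&0\end{pmatrix}$ or to $\begin{pmatrix}0&1\\0&1\\0&1\\0&1\end{pmatrix}$.
   Context: Circles are taken in $\hat{\mathbb C}=\mathbb R^2\cup\{\infty\}$; lines count as circles. A Descartes configuration is a set of four mutually tangent circles with disjoint interiors; an ordered, oriented one carries an ordering and a total orientation, with signed curvatures $b_i$ (reciprocal radius, negative if the interior is unbounded, $0$ for lines, all reversed for negative orientation). The curvature-center coordinate matrix $M_{\mathcal D}$ is the $4\times 3$ matrix with $i$-th row $(b_i,b_ix_i,b_iy_i)$, $(x_i,y_i)$ the center of the $i$-th circle; the augmented curvature-center coordinate matrix $W_{\mathcal D}$ is the $4\times4$ matrix with $i$-th row $(\bar b_i,b_i,b_ix_i,b_iy_i)$, where $\bar b_i=b_i(x_i^2+y_i^2)-1/b_i$ is the signed curvature of the image of the circle under inversion in the unit circle. For a line the rows are $(0,n_x,n_y)$ and $(2p\cdot n,0,n_x,n_y)$ respectively, with $n$ the unit normal pointing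 into the line's interior half-plane and $p$ any point of the line. *)

theory Defs
  imports Complex_Main
begin

text \<open>Disk c r: circle with centre c, radius r, interior the bounded open disk.
  Compl c r: circle with centre c, radius r, interior the unbounded complement of the closed disk
             (so its signed curvature is negative).
  Line n p: the line through p with unit normal n, interior the open half-plane into which n points.\<close>

datatype circ = Disk "real \<times> real" real | Compl "real \<times> real" real | Line "real \<times> real" "real \<times> real"

fun valid_circ :: "circ \<Rightarrow> bool" where
  "valid_circ (Disk c r) = (r > 0)"
| "valid_circ (Compl c r) = (r > 0)"
| "valid_circ (Line n p) = ((fst n)\<^sup>2 + (snd n)\<^sup>2 = 1)"

definition sqdist :: "real \<times> real \<Rightarrow> real \<times> real \<Rightarrow> real" where
  "sqdist z c = (fst z - fst c)\<^sup>2 + (snd z - snd c)\<^sup>2"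

text \<open>Interior, as a subset of the finite plane (the point at infinity lies only in the
  interiors of Compl-type circles, and two such interiors already meet in the plane).\<close>
fun circ_interior :: "circ \<Rightarrow> (real \<times> real) set" where
  "circ_interior (Disk c r) = {z. sqdist z c < r\<^sup>2}"
| "circ_interior (Compl c r) = {z. sqdist z c > r\<^sup>2}"
| "circ_interior (Line n p) = {z. (fst z - fst p) * fst n + (snd z - snd p) * snd n > 0}"

text \<open>The circle itself as a subset of the extended plane; None is the point at infinity.\<close>
fun circ_points :: "circ \<Rightarrow> (real \<times> real) option set" where
  "circ_points (Disk c r) = Some ` {z. sqdist z c = r\<^sup>2}"
| "circ_points (Compl c r) = Some ` {z. sqdist z c = r\<^sup>2}"
| "circ_points (Line n p) = insert None (Some ` {z. (fst z - fst p) * fst n + (snd z - snd p) * snd n = 0})"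

definition tangent_disjoint :: "circ \<Rightarrow> circ \<Rightarrow> bool" where
  "tangent_disjoint C D \<longleftrightarrow>
     circ_interior C \<inter> circ_interior D = {} \<and> (\<exists>!q. q \<in> circ_points C \<and> q \<in> circ_points D)"

definition descartes_config :: "(nat \<Rightarrow> circ) \<Rightarrow> bool" where
  "descartes_config C \<longleftrightarrow> (\<forall>i<4. valid_circ (C i)) \<and>
     (\<forall>i<4. \<forall>j<4. i \<noteq> j \<longrightarrow> tangent_disjoint (C i) (C j))"

fun M_row :: "circ \<Rightarrow> nat \<Rightarrow> real" where
  "M_row (Disk c r) j = (let b = 1 / r in [b, b * fst c, b * snd c] ! j)"
| "M_row (Compl c r) j = (let b = - 1 / r in [b, b * fst c, b * snd c] ! j)"
| "M_row (Line n p) j = [0, fst n, snd n] ! j"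

fun W_row :: "circ \<Rightarrow> nat \<Rightarrow> real" where
  "W_row (Disk c r) j = (let b = 1 / r in
      [b * ((fst c)\<^sup>2 + (snd c)\<^sup>2) - 1 / b, b, b * fst c, b * snd c] ! j)"
| "W_row (Compl c r) j = (let b = - 1 / r in
      [b * ((fst c)\<^sup>2 + (snd c)\<^sup>2) - 1 / b, b, b * fst c, b * snd c] ! j)"
| "W_row (Line n p) j =
      [2 * (fst p * fst n + snd p * snd n), 0, fst n, snd n] ! j"

text \<open>Orientation: pos = True is the positive orientation; negative orientation reverses all
  signs (curvatures, and correspondingly all rows).\<close>
definition orient_sign :: "bool \<Rightarrow> real" where
  "orient_sign pos = (if pos then 1 else -1)"

definition curv_center_matrix :: "bool \<Rightarrow> (nat \<Rightarrow> circ) \<Rightarrow> nat \<Rightarrow> nat \<Rightarrow> real" where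
  "curv_center_matrix pos C i j = orient_sign pos * M_row (C i) j"

definition aug_curv_center_matrix :: "bool \<Rightarrow> (nat \<Rightarrow> circ) \<Rightarrow> nat \<Rightarrow> nat \<Rightarrow> real" where
  "aug_curv_center_matrix pos C i j = orient_sign pos * W_row (C i) j"

end

theory Submission
  imports Defs "HOL-Analysis.Elementary_Metric_Spaces" "HOL-Analysis.Euclidean_Space"
    "HOL-Number_Theory.Cong"
begin

(*
  Write b_i for the curvatures, (X_i, Y_i) for the last two entries of row i of M and bbar_i
  for the first entry of row i of W. Checking each pair of tangent circles, and each circle
  against itself, gives the augmented Euclidean Descartes relations

    b_i bbar_j + b_j bbar_i = N_ij := 2 (X_i X_j + Y_i Y_j) + (-2 if i = j, 2 otherwise).

  As b, X, Y are integral, the bbar_i are integers iff g divides every N_ij and 2g divides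
  every N_ii; for "if", combine the relations with Bezout coefficients for g. These
  divisibilities say that the Gram matrix of the vectors (X_i, Y_i) is congruent modulo g to
  the matrix with 1 on the diagonal and -1 off it (off the diagonal only after doubling).
  Three plane vectors have vanishing Gram determinant, so g divides 32, and a finer count
  modulo 8 rules out 8 dvd g; for g = 1, 2, 4 they become the stated parity conditions.
*)

section \<open>Tangent circles\<close>

lemma sqdist_eq_dist_sq: "sqdist z c = (dist z c)\<^sup>2"
  by (cases z, cases c) (simp add: sqdist_def dist_Pair_Pair dist_real_def)

lemma inner_real_pair: "inner (x :: real \<times> real) y = fst x * fst y + snd x * snd y"
  by (cases x, cases y) simp

lemma norm_Line_normal: "valid_circ (Line n p) \<Longrightarrow> norm n = 1"
  by (simp add: norm_eq_sqrt_inner inner_real_pair power2_eq_square)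

lemma sqdist_less_iff: "0 < r \<Longrightarrow> sqdist z c < r\<^sup>2 \<longleftrightarrow> dist c z < r"
  using power2_less_imp_less[of "dist c z" r] power_strict_mono[of "dist c z" r 2]
  by (auto simp: sqdist_eq_dist_sq dist_commute)

lemma sqdist_greater_iff: "0 < r \<Longrightarrow> r\<^sup>2 < sqdist z c \<longleftrightarrow> r < dist c z"
  using power2_less_imp_less[of r "dist c z"] power_strict_mono[of r "dist c z" 2]
  by (auto simp: sqdist_eq_dist_sq dist_commute)

lemma sqdist_eq_iff: "0 < r \<Longrightarrow> sqdist z c = r\<^sup>2 \<longleftrightarrow> dist c z = r"
  by (simp add: sqdist_eq_dist_sq dist_commute power2_eq_iff_nonneg)

lemma circ_interior_Disk: "0 < r \<Longrightarrow> circ_interior (Disk c r) = ball c r"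
  by (simp add: set_eq_iff sqdist_less_iff)

lemma circ_interior_Compl: "0 < r \<Longrightarrow> circ_interior (Compl c r) = - cball c r"
  by (simp add: set_eq_iff sqdist_greater_iff not_le)

lemma circ_interior_Line: "circ_interior (Line n p) = {z. 0 < inner (z - p) n}"
  by (simp add: inner_real_pair)

lemma sphere_eq_sqdist: "0 < r \<Longrightarrow> sphere c r = {z. sqdist z c = r\<^sup>2}"
  by (auto simp: sqdist_eq_iff)

lemma circ_points_Disk: "0 < r \<Longrightarrow> circ_points (Disk c r) = Some ` sphere c r"
  by (simp add: sphere_eq_sqdist)

lemma circ_points_Compl: "0 < r \<Longrightarrow> circ_points (Compl c r) = Some ` sphere c r"
  by (simp add: sphere_eq_sqdist)

lemma circ_points_Line: "circ_points (Line n p) = insert None (Some ` {z. inner (z - p) n = 0})"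
  by (simp add: inner_real_pair)

declare circ_interior.simps [simp del] circ_points.simps [simp del]

lemma tangent_disjoint_sym: "tangent_disjoint C D \<Longrightarrow> tangent_disjoint D C"
  unfolding tangent_disjoint_def by (simp add: Int_commute conj_commute)

lemma tangent_disjoint_interiors:
  "tangent_disjoint C D \<Longrightarrow> z \<in> circ_interior C \<Longrightarrow> z \<notin> circ_interior D"
  unfolding tangent_disjoint_def by blast

lemma tangent_disjoint_common_point:
  "tangent_disjoint C D \<Longrightarrow> \<exists>q. q \<in> circ_points C \<and> q \<in> circ_points D"
  unfolding tangent_disjoint_def by blast

lemma dist_centres_Disk_Disk:
  assumes r: "0 < r" and s: "0 < s" and td: "tangent_disjoint (Disk c r) (Disk d s)"
  shows "dist c d = r + s"
proof (rule antisym)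
  obtain z where "z \<in> sphere c r" "z \<in> sphere d s"
    using tangent_disjoint_common_point[OF td] r s by (auto simp: circ_points_Disk)
  then show "dist c d \<le> r + s"
    using dist_triangle[of c d z] by (simp add: dist_commute)
next
  show "r + s \<le> dist c d"
  proof (rule ccontr)
    assume "\<not> r + s \<le> dist c d"
    then have far: "dist c d < r + s" by simp
    define t where "t = r / (r + s)"
    have t: "0 < t" "t < 1" using r s by (auto simp: t_def field_simps)
    define z where "z = c + t *\<^sub>R (d - c)"
    have "dist c z = t * dist c d"
      using t by (simp add: z_def dist_norm norm_minus_commute)
    also have "\<dots> < t * (r + s)" using t far by simp
    also have "\<dots> = r" using r s by (simp add: t_def)
    finally have "z \<in> ball c r" by simp
    have "z - d = (1 - t) *\<^sub>R (c - d)" by (simp add: z_def algebra_simps)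
    have "dist d z = norm (z - d)"
      by (simp add: dist_norm norm_minus_commute)
    also have "\<dots> = (1 - t) * dist c d"
      using \<open>z - d = _\<close> t by (simp add: dist_norm)
    also have "\<dots> < (1 - t) * (r + s)" using t far by simp
    also have "\<dots> = s" using r s by (simp add: t_def field_simps)
    finally have "z \<in> ball d s" by simp
    with \<open>z \<in> ball c r\<close> show False
      using tangent_disjoint_interiors[OF td, of z] r s by (auto simp: circ_interior_Disk)
  qed
qed

lemma dist_centres_Disk_Compl:
  assumes r: "0 < r" and R: "0 < R" and td: "tangent_disjoint (Disk c r) (Compl d R)"
  shows "dist c d = R - r"
proof (rule antisym)
  obtain z where "z \<in> sphere c r" "z \<in> sphere d R"
    using tangent_disjoint_common_point[OF td] r R by (auto simp: circ_points_Disk circ_points_Compl)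
  then show "R - r \<le> dist c d"
    using dist_triangle[of d z c] by (simp add: dist_commute)
next
  show "dist c d \<le> R - r"
  proof (rule ccontr)
    assume "\<not> dist c d \<le> R - r"
    then have far: "R - dist c d < r" by simp
    obtain e :: "real \<times> real" where e: "norm e = 1" "c - d = dist c d *\<^sub>R e"
    proof (cases "c = d")
      case True
      then show ?thesis by (intro that[of "(1, 0)"]) (simp_all add: zero_prod_def)
    next
      case False
      then show ?thesis by (intro that[of "(1 / dist c d) *\<^sub>R (c - d)"]) (simp_all add: dist_norm)
    qed
    define t where "t = (r + max (R - dist c d) 0) / 2"
    have t: "0 \<le> t" "t < r" "R - dist c d < t" using far r by (auto simp: t_def)
    define z where "z = c + t *\<^sub>R e"
    have "z \<in> ball c r" using t e(1) by (simp add: z_def dist_norm)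
    have "z - d = (dist c d + t) *\<^sub>R e"
      using e(2) by (simp add: z_def algebra_simps)
    have "dist d z = norm (z - d)"
      by (simp add: dist_norm norm_minus_commute)
    also have "\<dots> = dist c d + t"
      using \<open>z - d = _\<close> e(1) t by simp
    finally have "dist d z = dist c d + t" .
    then have "z \<notin> cball d R" using t by simp
    with \<open>z \<in> ball c r\<close> show False
      using tangent_disjoint_interiors[OF td, of z] r R by (auto simp: circ_interior_Disk circ_interior_Compl)
  qed
qed

lemma not_tangent_disjoint_Compl_Compl:
  assumes "0 < r" and "0 < R"
  shows "\<not> tangent_disjoint (Compl c r) (Compl d R)"
proof
  assume td: "tangent_disjoint (Compl c r) (Compl d R)"
  define t where "t = r + R + dist c d + 1"
  define z where "z = c + t *\<^sub>R (1 :: real, 0 :: real)"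
  have "0 < t"
    using assms by (simp add: t_def add_pos_nonneg)
  then have "dist c z = t"
    by (simp add: z_def dist_norm)
  moreover have "dist c z \<le> dist c d + dist d z" by (rule dist_triangle)
  ultimately have "r < dist c z" "R < dist d z"
    using assms zero_le_dist[of c d] unfolding t_def by linarith+
  then show False
    using tangent_disjoint_interiors[OF td, of z] assms by (simp add: circ_interior_Compl)
qed

lemma not_tangent_disjoint_Compl_Line:
  assumes "0 < R" and "valid_circ (Line n p)"
  shows "\<not> tangent_disjoint (Compl c R) (Line n p)"
proof
  assume td: "tangent_disjoint (Compl c R) (Line n p)"
  have n: "norm n = 1" "inner n n = 1"
    using norm_Line_normal[OF assms(2)] by (simp_all add: power2_norm_eq_inner[symmetric])
  define t where "t = R + dist c p + 1"
  define z where "z = p + t *\<^sub>R n"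
  have "dist p z = t"
    using n assms(1) by (simp add: z_def dist_norm t_def)
  moreover have "dist p z \<le> dist p c + dist c z" by (rule dist_triangle)
  ultimately have "z \<notin> cball c R"
    using assms(1) by (simp add: t_def dist_commute)
  moreover have "0 < inner (z - p) n"
    using n assms(1) by (simp add: z_def t_def add_pos_nonneg)
  ultimately show False
    using tangent_disjoint_interiors[OF td, of z] assms by (auto simp: circ_interior_Compl circ_interior_Line)
qed

lemma inner_Disk_Line:
  assumes r: "0 < r" and valid: "valid_circ (Line n p)" and td: "tangent_disjoint (Disk c r) (Line n p)"
  shows "inner (c - p) n = - r"
proof (rule antisym)
  have n: "norm n = 1" "inner n n = 1"
    using norm_Line_normal[OF valid] by (simp_all add: power2_norm_eq_inner[symmetric])
  show "inner (c - p) n \<le> - r"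
  proof (rule ccontr)
    assume "\<not> inner (c - p) n \<le> - r"
    define t where "t = (r + max (- inner (c - p) n) 0) / 2"
    have t: "0 \<le> t" "t < r" "- inner (c - p) n < t"
      using \<open>\<not> inner (c - p) n \<le> - r\<close> r by (auto simp: t_def)
    define z where "z = c + t *\<^sub>R n"
    have "z \<in> ball c r" using t n by (simp add: z_def dist_norm)
    have "inner (z - p) n = inner (c - p) n + t"
      using n by (simp add: z_def inner_diff_left inner_add_left algebra_simps)
    with \<open>z \<in> ball c r\<close> t show False
      using tangent_disjoint_interiors[OF td, of z] r by (auto simp: circ_interior_Disk circ_interior_Line)
  qed
  obtain z where "z \<in> sphere c r" "inner (z - p) n = 0"
    using tangent_disjoint_common_point[OF td] r by (auto simp: circ_points_Disk circ_points_Line)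
  moreover have "inner (c - p) n = inner (c - z) n + inner (z - p) n"
    by (simp add: inner_diff_left)
  moreover have "\<bar>inner (c - z) n\<bar> \<le> norm (c - z) * norm n" by (rule Cauchy_Schwarz_ineq2)
  ultimately show "- r \<le> inner (c - p) n"
    using n by (simp add: dist_norm)
qed

lemma inner_Line_Line:
  assumes "valid_circ (Line n p)" and "valid_circ (Line m q)"
    and td: "tangent_disjoint (Line n p) (Line m q)"
  shows "inner n m = - 1"
proof (rule antisym)
  have n: "norm n = 1" "inner n n = 1" and m: "norm m = 1" "inner m m = 1"
    using norm_Line_normal assms(1,2) by (simp_all add: power2_norm_eq_inner[symmetric])
  have "\<bar>inner n m\<bar> \<le> norm n * norm m" by (rule Cauchy_Schwarz_ineq2)
  then show "- 1 \<le> inner n m" using n m by simp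
  show "inner n m \<le> - 1"
  proof (rule ccontr)
    assume "\<not> inner n m \<le> - 1"
    then have pos: "0 < 1 + inner n m" by simp
    define t where "t = (\<bar>inner (p - q) m\<bar> + 1) / (1 + inner n m)"
    have t: "0 < t" "t * (1 + inner n m) = \<bar>inner (p - q) m\<bar> + 1"
      using pos by (auto simp: t_def)
    define z where "z = p + t *\<^sub>R (n + m)"
    have "inner (z - p) n = t * (1 + inner n m)"
      using n by (simp add: z_def inner_add_left algebra_simps inner_commute)
    then have "0 < inner (z - p) n" using t pos by simp
    moreover have "inner (z - q) m = inner (p - q) m + t * (1 + inner n m)"
      using m by (simp add: z_def inner_diff_left inner_add_left algebra_simps)
    then have "0 < inner (z - q) m" using t by simp
    ultimately show False
      using tangent_disjoint_interiors[OF td, of z] by (auto simp: circ_interior_Line)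
  qed
qed

section \<open>The augmented Descartes relations\<close>

(* Up to the factor -4, the form Q_W^-1 of the augmented Euclidean Descartes theorem,
   evaluated on the rows of W belonging to C and D. *)
definition pairing :: "circ \<Rightarrow> circ \<Rightarrow> real" where
  "pairing C D = W_row C 1 * W_row D 0 + W_row D 1 * W_row C 0
     - 2 * (W_row C 2 * W_row D 2 + W_row C 3 * W_row D 3)"

lemma pairing_sym: "pairing C D = pairing D C"
  by (simp add: pairing_def algebra_simps)

lemma pairing_self: "valid_circ C \<Longrightarrow> pairing C C = - 2"
  by (cases C) (auto simp: pairing_def Let_def field_simps power2_eq_square)

(* Circles with signed curvatures b, beta are tangent iff their centres are at distance
   |1/b + 1/beta|. *)
lemma pairing_round_circles:
  fixes b \<beta> :: real and c d :: "real \<times> real"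
  assumes "b \<noteq> 0" "\<beta> \<noteq> 0" and "sqdist c d = (1 / b + 1 / \<beta>)\<^sup>2"
  shows "b * (\<beta> * ((fst d)\<^sup>2 + (snd d)\<^sup>2) - 1 / \<beta>) + \<beta> * (b * ((fst c)\<^sup>2 + (snd c)\<^sup>2) - 1 / b)
    - 2 * (b * fst c * (\<beta> * fst d) + b * snd c * (\<beta> * snd d)) = 2"
proof -
  have "b * (\<beta> * ((fst d)\<^sup>2 + (snd d)\<^sup>2) - 1 / \<beta>) + \<beta> * (b * ((fst c)\<^sup>2 + (snd c)\<^sup>2) - 1 / b)
      - 2 * (b * fst c * (\<beta> * fst d) + b * snd c * (\<beta> * snd d)) - 2
    = b * \<beta> * (sqdist c d - (1 / b + 1 / \<beta>)\<^sup>2)"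
    using assms(1,2) by (simp add: sqdist_def field_simps power2_eq_square)
  with assms(3) show ?thesis
    by simp
qed

lemma pairing_Disk_Disk:
  assumes "0 < r" "0 < s" "tangent_disjoint (Disk c r) (Disk d s)"
  shows "pairing (Disk c r) (Disk d s) = 2"
proof -
  have "sqdist c d = (1 / (1 / r) + 1 / (1 / s))\<^sup>2"
    using dist_centres_Disk_Disk[OF assms] by (simp add: sqdist_eq_dist_sq)
  from pairing_round_circles[OF _ _ this] assms(1,2) show ?thesis
    by (simp add: pairing_def Let_def)
qed

lemma pairing_Disk_Compl:
  assumes "0 < r" "0 < R" "tangent_disjoint (Disk c r) (Compl d R)"
  shows "pairing (Disk c r) (Compl d R) = 2"
proof -
  have "sqdist c d = (1 / (1 / r) + 1 / (- 1 / R))\<^sup>2"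
    using dist_centres_Disk_Compl[OF assms] by (simp add: sqdist_eq_dist_sq power2_commute)
  from pairing_round_circles[OF _ _ this] assms(1,2) show ?thesis
    by (simp add: pairing_def Let_def)
qed

lemma pairing_Disk_Line:
  assumes "0 < r" "valid_circ (Line n p)" "tangent_disjoint (Disk c r) (Line n p)"
  shows "pairing (Disk c r) (Line n p) = 2"
proof -
  have "(fst p * fst n + snd p * snd n) - (fst c * fst n + snd c * snd n) = r"
    using inner_Disk_Line[OF assms] by (simp add: inner_real_pair algebra_simps)
  moreover have "pairing (Disk c r) (Line n p) =
      2 / r * ((fst p * fst n + snd p * snd n) - (fst c * fst n + snd c * snd n))"
    by (simp add: pairing_def Let_def algebra_simps)
  ultimately show ?thesis
    using assms(1) by simp
qed

lemma pairing_Line_Line: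
  assumes "valid_circ (Line n p)" "valid_circ (Line m q)" "tangent_disjoint (Line n p) (Line m q)"
  shows "pairing (Line n p) (Line m q) = 2"
  using inner_Line_Line[OF assms] by (simp add: pairing_def inner_real_pair)

lemma pairing_tangent:
  assumes "valid_circ C" "valid_circ D" "tangent_disjoint C D"
  shows "pairing C D = 2"
  using assms
  by (cases C; cases D)
    (auto simp: pairing_Disk_Disk pairing_Disk_Compl pairing_Disk_Line pairing_Line_Line
       pairing_sym[of "Compl _ _" "Disk _ _"] pairing_sym[of "Line _ _" "Disk _ _"]
       not_tangent_disjoint_Compl_Compl not_tangent_disjoint_Compl_Line
       dest: tangent_disjoint_sym)

section \<open>Plane Gram matrices modulo m\<close>

definition det3 :: "(nat \<Rightarrow> nat \<Rightarrow> 'a::comm_ring_1) \<Rightarrow> 'a" where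
  "det3 A = A 0 0 * A 1 1 * A 2 2 + A 0 1 * A 1 2 * A 2 0 + A 0 2 * A 1 0 * A 2 1
          - A 0 2 * A 1 1 * A 2 0 - A 0 1 * A 1 0 * A 2 2 - A 0 0 * A 1 2 * A 2 1"

lemma det3_gram_plane: "det3 (\<lambda>i j. X i * X j + Y i * Y j) = 0"
  by (simp add: det3_def algebra_simps)

lemma det3_scale: "det3 (\<lambda>i j. c * A i j) = c ^ 3 * det3 A"
  by (simp add: det3_def algebra_simps power3_eq_cube)

lemma det3_cong:
  fixes A B :: "nat \<Rightarrow> nat \<Rightarrow> 'a::unique_euclidean_ring"
  assumes "\<And>i j. i < 3 \<Longrightarrow> j < 3 \<Longrightarrow> [A i j = B i j] (mod m)"
  shows "[det3 A = det3 B] (mod m)"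
  unfolding det3_def by (intro cong_add cong_diff cong_mult assms) simp_all

definition gram_cong :: "nat \<Rightarrow> int \<Rightarrow> (nat \<Rightarrow> int) \<Rightarrow> (nat \<Rightarrow> int) \<Rightarrow> bool" where
  "gram_cong n m X Y \<longleftrightarrow> (\<forall>i<n. [X i ^ 2 + Y i ^ 2 = 1] (mod m)) \<and>
     (\<forall>i<n. \<forall>j<n. i \<noteq> j \<longrightarrow> [2 * (X i * X j + Y i * Y j) = - 2] (mod m))"

lemma gram_cong_dvd_modulus: "gram_cong n m X Y \<Longrightarrow> d dvd m \<Longrightarrow> gram_cong n d X Y"
  unfolding gram_cong_def by (meson cong_dvd_modulus)

(* The Gram determinant of three plane vectors is 0, while the matrix with 2 on the diagonal
   and -2 off it has determinant -32. *)
lemma gram_cong_dvd_32: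
  assumes "gram_cong n m X Y" and "3 \<le> n"
  shows "m dvd 32"
proof -
  define B :: "nat \<Rightarrow> nat \<Rightarrow> int" where "B i j = (if i = j then 2 else - 2)" for i j
  have "[2 * (X i * X j + Y i * Y j) = B i j] (mod m)" if "i < 3" "j < 3" for i j
  proof (cases "i = j")
    case True
    have "[2 * (X i ^ 2 + Y i ^ 2) = 2 * 1] (mod m)"
      using assms that by (intro cong_scalar_left) (simp add: gram_cong_def)
    with True show ?thesis by (simp add: B_def power2_eq_square)
  next
    case False
    with assms that show ?thesis by (simp add: B_def gram_cong_def)
  qed
  then have "[det3 (\<lambda>i j. 2 * (X i * X j + Y i * Y j)) = det3 B] (mod m)"
    by (rule det3_cong)
  moreover have "det3 (\<lambda>i j. 2 * (X i * X j + Y i * Y j)) = 2 ^ 3 * det3 (\<lambda>i j. X i * X j + Y i * Y j)"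
    by (rule det3_scale)
  ultimately have "[0 = - 32] (mod m)"
    by (simp add: det3_gram_plane) (simp add: det3_def B_def)
  then show ?thesis
    by (metis cong_0_iff cong_sym dvd_minus_iff)
qed

lemma odd_square_cong_1_mod_8:
  fixes s :: int
  assumes "[s = - 1] (mod 4)"
  shows "[s ^ 2 = 1] (mod 8)"
proof -
  obtain t where "s + 1 = 4 * t"
    using assms by (auto simp: cong_iff_dvd_diff elim!: dvdE)
  then have s: "s = 4 * t - 1"
    by linarith
  have "s ^ 2 - 1 = 8 * (2 * t ^ 2 - t)"
    unfolding s by (simp add: power2_eq_square algebra_simps)
  then show ?thesis
    by (simp add: cong_iff_dvd_diff)
qed

(* Modulo 8 the Gram determinant would be 1 - 2 - 3 = -4. *)
lemma not_gram_cong_8: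
  assumes "3 \<le> n"
  shows "\<not> gram_cong n 8 X Y"
proof
  assume cong8: "gram_cong n 8 X Y"
  define G where "G i j = X i * X j + Y i * Y j" for i j
  have diag: "[G i i = 1] (mod 8)" if "i < 3" for i
    using cong8 that assms by (simp add: gram_cong_def G_def power2_eq_square)
  have off: "[G i j = - 1] (mod 4)" if "i < 3" "j < 3" "i \<noteq> j" for i j
  proof -
    have "8 dvd 2 * G i j + 2"
      using cong8 that assms by (simp add: gram_cong_def G_def cong_iff_dvd_diff)
    then show ?thesis
      by (simp add: cong_iff_dvd_diff) presburger
  qed
  have "[G 0 1 * G 1 2 * G 0 2 = (- 1) * (- 1) * (- 1)] (mod 4)"
    by (intro cong_mult off) auto
  from cong_cmult_leftI[OF this, of 2]
  have triple: "[2 * (G 0 1 * G 1 2 * G 0 2) = - 2] (mod 8)"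
    by simp
  have "det3 G = G 0 0 * G 1 1 * G 2 2 + 2 * (G 0 1 * G 1 2 * G 0 2)
      - G 0 0 * (G 1 2)\<^sup>2 - G 1 1 * (G 0 2)\<^sup>2 - G 2 2 * (G 0 1)\<^sup>2"
    by (simp add: det3_def G_def power2_eq_square algebra_simps)
  also have "[\<dots> = 1 * 1 * 1 + (- 2) - 1 * 1 - 1 * 1 - 1 * 1] (mod 8)"
    by (intro cong_add cong_diff cong_mult diag triple odd_square_cong_1_mod_8 off) auto
  finally have "[0 = - 4] (mod 8 :: int)"
    using det3_gram_plane[of X Y] by (simp add: G_def[abs_def])
  then show False
    by (simp add: cong_iff_dvd_diff)
qed

lemma sum_squares_cong_1_mod_2_iff:
  fixes x y :: int
  shows "[x ^ 2 + y ^ 2 = 1] (mod 2) \<longleftrightarrow> odd (x + y)"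
proof -
  have "[x ^ 2 + y ^ 2 = 1] (mod 2) \<longleftrightarrow> even (x ^ 2 + y ^ 2 - 1)"
    by (simp add: cong_iff_dvd_diff)
  then show ?thesis
    by simp
qed

lemma square_mod_4:
  fixes x :: int
  shows "x ^ 2 mod 4 = (if even x then 0 else 1)"
proof (cases "even x")
  case True
  then obtain t where "x = 2 * t" by blast
  then have "x ^ 2 = 4 * t ^ 2" by (simp add: power2_eq_square)
  with True show ?thesis by simp
next
  case False
  then obtain t where "x = 2 * t + 1" using oddE by blast
  then have "x ^ 2 = 4 * (t ^ 2 + t) + 1" by (simp add: power2_eq_square algebra_simps)
  then have "x ^ 2 mod 4 = (4 * (t ^ 2 + t) + 1) mod 4" by (simp only:)
  also have "\<dots> = 1" by presburger
  finally show ?thesis using False by simp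
qed

lemma sum_squares_cong_1_mod_4_iff:
  fixes x y :: int
  shows "[x ^ 2 + y ^ 2 = 1] (mod 4) \<longleftrightarrow> odd x \<noteq> odd y"
proof -
  have "(x ^ 2 + y ^ 2) mod 4 = (x ^ 2 mod 4 + y ^ 2 mod 4) mod 4"
    by (simp add: mod_add_eq)
  then show ?thesis
    by (simp add: cong_def square_mod_4)
qed

lemma double_cong_minus_2_mod_4_iff:
  fixes s :: int
  shows "[2 * s = - 2] (mod 4) \<longleftrightarrow> odd s"
  unfolding cong_iff_dvd_diff by presburger

lemma gram_cong_1: "gram_cong n 1 X Y"
  by (simp add: gram_cong_def)

lemma gram_cong_2_iff: "gram_cong n 2 X Y \<longleftrightarrow> (\<forall>i<n. odd (X i + Y i))"
  by (simp add: gram_cong_def sum_squares_cong_1_mod_2_iff cong_iff_dvd_diff)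

lemma gram_cong_4_iff:
  "gram_cong n 4 X Y \<longleftrightarrow>
     (\<forall>i<n. odd (X i) \<and> even (Y i)) \<or> (\<forall>i<n. even (X i) \<and> odd (Y i))"
proof
  assume cong4: "gram_cong n 4 X Y"
  have one_odd: "odd (X i) \<longleftrightarrow> even (Y i)" if "i < n" for i
    using cong4 that by (auto simp: gram_cong_def sum_squares_cong_1_mod_4_iff)
  have "odd (X i * X j + Y i * Y j)" if "i < n" "j < n" "i \<noteq> j" for i j
    using cong4 that unfolding gram_cong_def double_cong_minus_2_mod_4_iff by blast
  then have same: "odd (X i) \<longleftrightarrow> odd (X j)" if "i < n" "j < n" for i j
    using one_odd[OF that(1)] one_odd[OF that(2)] that by (cases "i = j") auto
  show "(\<forall>i<n. odd (X i) \<and> even (Y i)) \<or> (\<forall>i<n. even (X i) \<and> odd (Y i))"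
  proof (cases "\<forall>i<n. odd (X i)")
    case True
    then show ?thesis using one_odd by blast
  next
    case False
    then obtain j where "j < n" "even (X j)" by blast
    then show ?thesis using same one_odd by blast
  qed
next
  assume types: "(\<forall>i<n. odd (X i) \<and> even (Y i)) \<or> (\<forall>i<n. even (X i) \<and> odd (Y i))"
  have "odd (X i * X j + Y i * Y j)" if "i < n" "j < n" for i j
    using types that by auto
  then show "gram_cong n 4 X Y"
    using types unfolding gram_cong_def sum_squares_cong_1_mod_4_iff double_cong_minus_2_mod_4_iff
    by blast
qed

lemma gram_cong_modulus_cases:
  assumes "gram_cong n m X Y" and "3 \<le> n" and "0 \<le> m"
  shows "m = 1 \<or> m = 2 \<or> m = 4"
proof -
  have "m dvd 2 ^ 5"
    using gram_cong_dvd_32[OF assms(1,2)] by simp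
  then obtain e where "e \<le> 5" and m: "m = 2 ^ e"
    using divides_primepow[of 2 m 5] assms(3) by auto
  have "\<not> 2 ^ 3 dvd m"
    using not_gram_cong_8[OF assms(2)] gram_cong_dvd_modulus[OF assms(1)] by auto
  then have "e < 3"
    unfolding m using le_imp_power_dvd not_less by blast
  then show ?thesis
    unfolding m by (auto simp: less_Suc_eq numeral_3_eq_3)
qed

lemma gram_cong_iff:
  assumes "3 \<le> n" and "0 \<le> m"
  shows "gram_cong n m X Y \<longleftrightarrow>
     m = 1 \<or> (m = 2 \<and> (\<forall>i<n. odd (X i + Y i))) \<or>
     (m = 4 \<and> ((\<forall>i<n. odd (X i) \<and> even (Y i)) \<or> (\<forall>i<n. even (X i) \<and> odd (Y i))))"
proof
  assume "gram_cong n m X Y"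
  with gram_cong_modulus_cases[OF this assms] gram_cong_2_iff gram_cong_4_iff
  show "m = 1 \<or> (m = 2 \<and> (\<forall>i<n. odd (X i + Y i))) \<or>
     (m = 4 \<and> ((\<forall>i<n. odd (X i) \<and> even (Y i)) \<or> (\<forall>i<n. even (X i) \<and> odd (Y i))))"
    by auto
qed (auto simp: gram_cong_1 gram_cong_2_iff gram_cong_4_iff)

section \<open>Integrality of the first column of W\<close>

lemma double_dvd_quadratic_form:
  fixes N :: "nat \<Rightarrow> nat \<Rightarrow> int"
  assumes "\<forall>i<n. \<forall>j<n. N i j = N j i"
    and "\<forall>i<n. \<forall>j<n. g dvd N i j" and "\<forall>i<n. 2 * g dvd N i i"
  shows "2 * g dvd (\<Sum>i<n. \<Sum>j<n. u i * u j * N i j)"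
  using assms
proof (induction n)
  case 0
  then show ?case by simp
next
  case (Suc n)
  have split: "(\<Sum>i<Suc n. \<Sum>j<Suc n. u i * u j * N i j) =
      (\<Sum>i<n. \<Sum>j<n. u i * u j * N i j) + 2 * (\<Sum>i<n. u i * u n * N i n) + u n * u n * N n n"
    using Suc.prems(1) by (simp add: sum.distrib algebra_simps)
  have "2 * g dvd (\<Sum>i<n. \<Sum>j<n. u i * u j * N i j)"
    using Suc.prems by (intro Suc.IH) auto
  moreover have "2 * g dvd 2 * (\<Sum>i<n. u i * u n * N i n)"
    using Suc.prems(2) by (intro mult_dvd_mono dvd_sum dvd_mult) auto
  moreover have "2 * g dvd u n * u n * N n n"
    using Suc.prems(3) by simp
  ultimately show ?case
    unfolding split by (intro dvd_add)
qed

(* With T = (SUM j. u j * k j), the form (SUM i j. u i * u j * N i j) equals 2 g T, so T is an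
   integer, and then g * k i = (SUM j. u j * N i j) - b i * T. *)
lemma integral_of_symmetric_products:
  fixes b u :: "nat \<Rightarrow> int" and N :: "nat \<Rightarrow> nat \<Rightarrow> int" and k :: "nat \<Rightarrow> 'a::field_char_0"
  assumes prod: "\<forall>i<n. \<forall>j<n. of_int (b i) * k j + of_int (b j) * k i = of_int (N i j)"
    and bezout: "(\<Sum>i<n. u i * b i) = g" and "g \<noteq> 0" and "\<forall>i<n. g dvd b i"
    and "\<forall>i<n. \<forall>j<n. g dvd N i j" and "\<forall>i<n. 2 * g dvd N i i"
    and "i < n"
  shows "k i \<in> \<int>"
proof -
  define T where "T = (\<Sum>j<n. of_int (u j) * k j)"
  have g: "(\<Sum>i<n. of_int (u i) * of_int (b i)) = (of_int g :: 'a)"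
    using bezout by (metis (mono_tags, lifting) of_int_mult of_int_sum sum.cong)
  have "N i j = N j i" if "i < n" "j < n" for i j
    using prod that by (metis add.commute of_int_eq_iff)
  then have "2 * g dvd (\<Sum>i<n. \<Sum>j<n. u i * u j * N i j)"
    using assms(5,6) by (intro double_dvd_quadratic_form) auto
  then obtain t where t: "(\<Sum>i<n. \<Sum>j<n. u i * u j * N i j) = 2 * g * t"
    by (elim dvdE)
  have "of_int (\<Sum>i<n. \<Sum>j<n. u i * u j * N i j) =
      (\<Sum>i<n. \<Sum>j<n. of_int (u i) * of_int (u j) * (of_int (b i) * k j + of_int (b j) * k i))"
    using prod by (simp add: of_int_sum)
  also have "\<dots> = (\<Sum>i<n. of_int (u i) * of_int (b i)) * T + T * (\<Sum>j<n. of_int (u j) * of_int (b j))"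
    unfolding T_def sum_product by (simp add: sum.distrib algebra_simps)
  finally have "2 * of_int g * of_int t = 2 * of_int g * T"
    unfolding t g by simp
  then have T: "T = of_int t"
    using \<open>g \<noteq> 0\<close> by simp
  have "of_int (\<Sum>j<n. u j * N i j) = (\<Sum>j<n. of_int (u j) * (of_int (b i) * k j + of_int (b j) * k i))"
    using prod \<open>i < n\<close> by (simp add: of_int_sum)
  also have "\<dots> = of_int (b i) * T + (\<Sum>j<n. of_int (u j) * of_int (b j)) * k i"
    unfolding T_def by (simp add: sum.distrib sum_distrib_left sum_distrib_right algebra_simps)
  finally have "of_int g * k i = of_int ((\<Sum>j<n. u j * N i j) - b i * t)"
    unfolding g T by simp
  moreover have "g dvd (\<Sum>j<n. u j * N i j) - b i * t"
    using assms(4,5) \<open>i < n\<close> by (intro dvd_diff dvd_sum dvd_mult dvd_mult2) auto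
  then obtain z where "(\<Sum>j<n. u j * N i j) - b i * t = g * z"
    by (elim dvdE)
  ultimately have "k i = of_int z"
    using \<open>g \<noteq> 0\<close> by simp
  then show ?thesis
    by simp
qed

lemma integral_iff_gram_cong:
  fixes b u X Y :: "nat \<Rightarrow> int" and k :: "nat \<Rightarrow> 'a::field_char_0"
  assumes "3 \<le> n"
    and rel: "\<forall>i<n. \<forall>j<n. of_int (b i) * k j + of_int (b j) * k i =
                 of_int (2 * (X i * X j + Y i * Y j) + (if i = j then - 2 else 2))"
    and bezout: "(\<Sum>i<n. u i * b i) = g" and "\<forall>i<n. g dvd b i"
  shows "(\<forall>i<n. k i \<in> \<int>) \<longleftrightarrow> gram_cong n g X Y"
proof -
  define N where "N i j = 2 * (X i * X j + Y i * Y j) + (if i = j then - 2 else 2)" for i j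
  have diag: "[X i ^ 2 + Y i ^ 2 = 1] (mod g) \<longleftrightarrow> 2 * g dvd N i i" for i
  proof -
    have "N i i = 2 * (X i ^ 2 + Y i ^ 2 - 1)"
      by (simp add: N_def power2_eq_square)
    then show ?thesis
      by (simp only: cong_iff_dvd_diff dvd_mult_cancel_left) simp
  qed
  have off_diag: "[2 * (X i * X j + Y i * Y j) = - 2] (mod g) \<longleftrightarrow> g dvd N i j" if "i \<noteq> j" for i j
    using that by (simp add: N_def cong_iff_dvd_diff)
  have "gram_cong n g X Y \<longleftrightarrow> (\<forall>i<n. \<forall>j<n. i \<noteq> j \<longrightarrow> g dvd N i j) \<and> (\<forall>i<n. 2 * g dvd N i i)"
    unfolding gram_cong_def diag using off_diag by blast
  also have "\<dots> \<longleftrightarrow> (\<forall>i<n. \<forall>j<n. g dvd N i j) \<and> (\<forall>i<n. 2 * g dvd N i i)"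
    by (metis dvd_mult_right)
  finally have gram_iff: "gram_cong n g X Y \<longleftrightarrow> \<dots>" .
  have "(\<forall>i<n. k i \<in> \<int>) \<longleftrightarrow> (\<forall>i<n. \<forall>j<n. g dvd N i j) \<and> (\<forall>i<n. 2 * g dvd N i i)"
  proof
    assume "\<forall>i<n. k i \<in> \<int>"
    then have "\<forall>i. \<exists>z. i < n \<longrightarrow> k i = of_int z"
      by (auto elim: Ints_cases)
    then obtain c where c: "\<forall>i<n. k i = of_int (c i)"
      unfolding choice_iff by blast
    have "N i j = b i * c j + b j * c i" if "i < n" "j < n" for i j
    proof -
      have "of_int (N i j) = (of_int (b i * c j + b j * c i) :: 'a)"
        using rel c that unfolding N_def[symmetric] by simp
      then show ?thesis
        by (simp only: of_int_eq_iff)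
    qed
    then show "(\<forall>i<n. \<forall>j<n. g dvd N i j) \<and> (\<forall>i<n. 2 * g dvd N i i)"
      using assms(4) by (simp add: mult_dvd_mono)
  next
    assume dvd: "(\<forall>i<n. \<forall>j<n. g dvd N i j) \<and> (\<forall>i<n. 2 * g dvd N i i)"
    have "g \<noteq> 0"
    proof
      assume "g = 0"
      with dvd gram_iff have "gram_cong n 0 X Y"
        by simp
      then show False
        using gram_cong_dvd_32[OF _ \<open>3 \<le> n\<close>] by fastforce
    qed
    then show "\<forall>i<n. k i \<in> \<int>"
      using integral_of_symmetric_products[OF rel[unfolded N_def[symmetric]] bezout _ assms(4)] dvd
      by blast
  qed
  with gram_iff show ?thesis
    by simp
qed

lemma gcd4_bezout:
  fixes b :: "nat \<Rightarrow> int"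
  obtains u where "(\<Sum>i<4. u i * b i) = gcd (gcd (b 0) (b 1)) (gcd (b 2) (b 3))"
proof -
  obtain u0 u1 where u01: "u0 * b 0 + u1 * b 1 = gcd (b 0) (b 1)"
    using bezout_int by blast
  obtain u2 u3 where u23: "u2 * b 2 + u3 * b 3 = gcd (b 2) (b 3)"
    using bezout_int by blast
  obtain v w where "v * gcd (b 0) (b 1) + w * gcd (b 2) (b 3) = gcd (gcd (b 0) (b 1)) (gcd (b 2) (b 3))"
    using bezout_int by blast
  then have "(\<Sum>i<4. [v * u0, v * u1, w * u2, w * u3] ! i * b i) = gcd (gcd (b 0) (b 1)) (gcd (b 2) (b 3))"
    unfolding u01[symmetric] u23[symmetric] by (simp add: numeral_eq_Suc algebra_simps)
  then show ?thesis
    by (rule that)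
qed

lemma gcd4_dvd:
  fixes b :: "nat \<Rightarrow> int"
  assumes "i < 4"
  shows "gcd (gcd (b 0) (b 1)) (gcd (b 2) (b 3)) dvd b i"
proof -
  have "i = 0 \<or> i = 1 \<or> i = 2 \<or> i = 3"
    using assms by auto
  then show ?thesis
    by (elim disjE) (meson dvd_trans gcd_dvd1 gcd_dvd2)+
qed

lemma curv_center_matrix_eq_aug:
  "j < 3 \<Longrightarrow> curv_center_matrix pos C i j = aug_curv_center_matrix pos C i (Suc j)"
  by (cases "C i") (auto simp: curv_center_matrix_def aug_curv_center_matrix_def Let_def
      less_Suc_eq numeral_3_eq_3)

lemma aug_curv_center_matrix_integral_iff:
  assumes "\<forall>i<4. \<forall>j<3. curv_center_matrix pos C i j \<in> \<int>"
  shows "(\<forall>i<4. \<forall>j<4. aug_curv_center_matrix pos C i j \<in> \<int>) \<longleftrightarrow>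
    (\<forall>i<4. aug_curv_center_matrix pos C i 0 \<in> \<int>)"
proof (intro iffI allI impI)
  fix i j :: nat
  assume "\<forall>i<4. aug_curv_center_matrix pos C i 0 \<in> \<int>" "i < 4" "j < 4"
  then show "aug_curv_center_matrix pos C i j \<in> \<int>"
    using assms by (cases j) (auto simp flip: curv_center_matrix_eq_aug)
qed simp

lemma aug_curv_center_matrix_rows:
  fixes C :: "nat \<Rightarrow> circ" and pos :: bool
  defines "W \<equiv> aug_curv_center_matrix pos C"
  assumes "descartes_config C" and "i < 4" and "j < 4"
  shows "W i 1 * W j 0 + W j 1 * W i 0 =
    2 * (W i 2 * W j 2 + W i 3 * W j 3) + (if i = j then - 2 else 2)"
proof -
  have "W i 1 * W j 0 + W j 1 * W i 0 - 2 * (W i 2 * W j 2 + W i 3 * W j 3) =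
      (orient_sign pos * orient_sign pos) * pairing (C i) (C j)"
    unfolding W_def aug_curv_center_matrix_def pairing_def by (simp add: algebra_simps)
  also have "\<dots> = (if i = j then - 2 else 2)"
    using assms(2-4) by (auto simp: orient_sign_def descartes_config_def pairing_self pairing_tangent)
  finally show ?thesis
    by simp
qed

theorem theorem8p2:
  fixes C :: "nat \<Rightarrow> circ" and pos :: bool
  defines "M \<equiv> curv_center_matrix pos C"
  defines "W \<equiv> aug_curv_center_matrix pos C"
  defines "a \<equiv> (\<lambda>i. \<lfloor>M i 0\<rfloor>)"
  defines "g \<equiv> gcd (gcd (a 0) (a 1)) (gcd (a 2) (a 3))"
  assumes "descartes_config C"
  assumes "\<forall>i<4. \<forall>j<3. M i j \<in> \<int>"
  shows "(\<forall>i<4. \<forall>j<4. W i j \<in> \<int>) \<longleftrightarrow>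
           (g = 1
          \<or> (g = 2 \<and> (\<forall>i<4. odd (\<lfloor>M i 1\<rfloor> + \<lfloor>M i 2\<rfloor>)))
          \<or> (g = 4 \<and> ((\<forall>i<4. odd \<lfloor>M i 1\<rfloor> \<and> even \<lfloor>M i 2\<rfloor>)
                     \<or> (\<forall>i<4. even \<lfloor>M i 1\<rfloor> \<and> odd \<lfloor>M i 2\<rfloor>))))"
proof -
  define X Y k where "X i = \<lfloor>M i 1\<rfloor>" and "Y i = \<lfloor>M i 2\<rfloor>" and "k i = W i 0" for i
  have entries: "of_int (a i) = W i 1" "of_int (X i) = W i 2" "of_int (Y i) = W i 3" if "i < 4" for i
  proof -
    have "of_int \<lfloor>M i j\<rfloor> = W i (Suc j)" if "j < 3" for j
      using assms(6) \<open>i < 4\<close> that by (auto simp: M_def W_def curv_center_matrix_eq_aug elim!: Ints_cases)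
    from this[of 0] this[of 1] this[of 2]
    show "of_int (a i) = W i 1" "of_int (X i) = W i 2" "of_int (Y i) = W i 3"
      by (simp_all add: a_def X_def Y_def numeral_2_eq_2 numeral_3_eq_3)
  qed
  have rel: "\<forall>i<4. \<forall>j<4. of_int (a i) * k j + of_int (a j) * k i =
      of_int (2 * (X i * X j + Y i * Y j) + (if i = j then - 2 else 2))"
    using aug_curv_center_matrix_rows[OF assms(5)] entries by (simp add: W_def k_def)
  obtain u where "(\<Sum>i<4. u i * a i) = g"
    unfolding g_def by (rule gcd4_bezout)
  then have "(\<forall>i<4. k i \<in> \<int>) \<longleftrightarrow> gram_cong 4 g X Y"
    using gcd4_dvd unfolding g_def by (intro integral_iff_gram_cong[OF _ rel]) auto
  moreover have "(\<forall>i<4. \<forall>j<4. W i j \<in> \<int>) \<longleftrightarrow> (\<forall>i<4. k i \<in> \<int>)"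
    using assms(6) unfolding M_def W_def k_def by (rule aug_curv_center_matrix_integral_iff)
  moreover have "gram_cong 4 g X Y \<longleftrightarrow> g = 1 \<or> (g = 2 \<and> (\<forall>i<4. odd (X i + Y i))) \<or>
      (g = 4 \<and> ((\<forall>i<4. odd (X i) \<and> even (Y i)) \<or> (\<forall>i<4. even (X i) \<and> odd (Y i))))"
    by (rule gram_cong_iff) (simp_all add: g_def)
  ultimately show ?thesis
    by (simp only: X_def Y_def)
qed

end
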